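(* Let $f_1,\dots,f_n:\mathbb{R}^d\to\mathbb{R}$ be such that each $f_i$ is $L_i$-smooth and has a minimizer $x_i$, let $\alpha_1,\dots,\alpha_n\in(0,1)$ and $\tilde f(x) = \frac{1}{n}\sum_{i=1}^n f_i(\alpha_i x + (1-\alpha_i)x_i)$. Let $x^\alpha$ be a minimizer of $\tilde f$ and $L_\alpha = \frac{1}{n}\sum_i\alpha_i^2 L_i$. Then for every $x\in\mathbb{R}^d$, \[ \|\nabla\tilde f(x)\| \leq L_\alpha\|x - x^\alpha\| \quad\text{and}\quad \tilde f(x) - \tilde f(x^\alpha) \leq \frac{L_\alpha}{2}\|x - x^\alpha\|^2. \]
   Context: A differentiable $g$ is $L$-smooth if $\|\nabla g(x)-\nabla g(y)\|\leq L\|x-y\|$ for all $x,y$. *)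

theory Defs
  imports "HOL-Analysis.Analysis"
begin

definition has_gradient :: "('a::euclidean_space \<Rightarrow> real) \<Rightarrow> 'a \<Rightarrow> 'a \<Rightarrow> bool" where
  "has_gradient g v x \<longleftrightarrow> (g has_derivative (\<lambda>h. v \<bullet> h)) (at x)"

definition L_smooth :: "real \<Rightarrow> ('a::euclidean_space \<Rightarrow> real) \<Rightarrow> bool" where
  "L_smooth L g \<longleftrightarrow> (\<exists>G. (\<forall>x. has_gradient g (G x) x) \<and>
      (\<forall>x y. norm (G x - G y) \<le> L * norm (x - y)))"

definition is_minimizer :: "('a \<Rightarrow> real) \<Rightarrow> 'a \<Rightarrow> bool" where
  "is_minimizer g z \<longleftrightarrow> (\<forall>y. g z \<le> g y)"

end

theory Submission
  imports Defs
begin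

text \<open>The averaged objective is itself smooth: each summand is an \<open>L\<^sub>i\<close>-smooth function
  precomposed with an affine map of slope \<open>\<alpha>\<^sub>i\<close>, hence \<open>\<alpha>\<^sub>i\<^sup>2 L\<^sub>i\<close>-smooth, and
  smoothness constants add under sums and scale under nonnegative multiples, so the average is
  \<open>L\<^sub>\<alpha>\<close>-smooth. At the minimizer \<open>x\<^sup>\<alpha>\<close> its gradient vanishes, so the Lipschitz bound on the
  gradient gives the first inequality and the descent lemma the second.\<close>

lemma has_gradient_zero_if_minimizer:
  assumes "has_gradient g v z" "is_minimizer g z"
  shows "v = 0"
proof -
  have "(\<lambda>h. v \<bullet> h) = (\<lambda>h. 0)"
    using has_derivative_local_min[of g "\<lambda>h. v \<bullet> h" z] assms
    unfolding has_gradient_def is_minimizer_def by auto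
  then have "v \<bullet> v = 0" by metis
  then show ?thesis by simp
qed

lemma has_gradient_compose_affine:
  assumes "has_gradient g v (a *\<^sub>R x + b)"
  shows "has_gradient (\<lambda>x. g (a *\<^sub>R x + b)) (a *\<^sub>R v) x"
proof -
  have "((\<lambda>x. a *\<^sub>R x + b) has_derivative (\<lambda>h. a *\<^sub>R h)) (at x)"
    by (auto intro!: derivative_eq_intros)
  from has_derivative_compose[OF this assms[unfolded has_gradient_def]]
  show ?thesis
    unfolding has_gradient_def by (rule has_derivative_eq_rhs) (simp add: o_def fun_eq_iff)
qed

lemma L_smooth_compose_affine:
  assumes "L_smooth L g"
  shows "L_smooth (a\<^sup>2 * L) (\<lambda>x. g (a *\<^sub>R x + b))"
proof -
  obtain G where grad: "\<And>x. has_gradient g (G x) x"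
    and lip: "\<And>x y. norm (G x - G y) \<le> L * norm (x - y)"
    using assms unfolding L_smooth_def by blast
  have "norm (a *\<^sub>R G (a *\<^sub>R x + b) - a *\<^sub>R G (a *\<^sub>R y + b)) \<le> a\<^sup>2 * L * norm (x - y)" for x y
  proof -
    have "norm (a *\<^sub>R G (a *\<^sub>R x + b) - a *\<^sub>R G (a *\<^sub>R y + b))
        = \<bar>a\<bar> * norm (G (a *\<^sub>R x + b) - G (a *\<^sub>R y + b))"
      by (simp flip: scaleR_diff_right)
    also have "\<dots> \<le> \<bar>a\<bar> * (L * norm (a *\<^sub>R (x - y)))"
      using lip[of "a *\<^sub>R x + b" "a *\<^sub>R y + b"]
      by (intro mult_left_mono) (simp_all add: scaleR_diff_right)
    also have "\<dots> = a\<^sup>2 * L * norm (x - y)"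
      by (simp add: power2_eq_square abs_mult_self_eq)
    finally show ?thesis .
  qed
  with has_gradient_compose_affine[OF grad] show ?thesis
    unfolding L_smooth_def by (intro exI[of _ "\<lambda>x. a *\<^sub>R G (a *\<^sub>R x + b)"]) blast
qed

lemma L_smooth_scale:
  assumes "L_smooth L g"
  shows "L_smooth (\<bar>c\<bar> * L) (\<lambda>x. c * g x)"
proof -
  obtain G where grad: "\<And>x. has_gradient g (G x) x"
    and lip: "\<And>x y. norm (G x - G y) \<le> L * norm (x - y)"
    using assms unfolding L_smooth_def by blast
  have "has_gradient (\<lambda>x. c * g x) (c *\<^sub>R G x) x" for x
    using has_derivative_mult_right[OF grad[of x, unfolded has_gradient_def], of c]
    unfolding has_gradient_def by (rule has_derivative_eq_rhs) (simp add: fun_eq_iff)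
  moreover have "norm (c *\<^sub>R G x - c *\<^sub>R G y) \<le> \<bar>c\<bar> * L * norm (x - y)" for x y
    using mult_left_mono[OF lip[of x y] abs_ge_zero[of c]]
    by (simp flip: scaleR_diff_right add: mult.assoc)
  ultimately show ?thesis
    unfolding L_smooth_def by (intro exI[of _ "\<lambda>x. c *\<^sub>R G x"]) blast
qed

lemma L_smooth_sum:
  assumes "finite I" and "\<And>i. i \<in> I \<Longrightarrow> L_smooth (L i) (g i)"
  shows "L_smooth (\<Sum>i\<in>I. L i) (\<lambda>x. \<Sum>i\<in>I. g i x)"
proof -
  obtain G where grad: "\<And>i x. i \<in> I \<Longrightarrow> has_gradient (g i) (G i x) x"
    and lip: "\<And>i x y. i \<in> I \<Longrightarrow> norm (G i x - G i y) \<le> L i * norm (x - y)"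
    using assms(2) unfolding L_smooth_def by metis
  have "has_gradient (\<lambda>x. \<Sum>i\<in>I. g i x) (\<Sum>i\<in>I. G i x) x" for x
  proof -
    have "((\<lambda>x. \<Sum>i\<in>I. g i x) has_derivative (\<lambda>h. \<Sum>i\<in>I. G i x \<bullet> h)) (at x)"
      using grad unfolding has_gradient_def by (intro has_derivative_sum) auto
    then show ?thesis
      unfolding has_gradient_def by (rule has_derivative_eq_rhs) (simp add: fun_eq_iff inner_sum_left)
  qed
  moreover have "norm ((\<Sum>i\<in>I. G i x) - (\<Sum>i\<in>I. G i y)) \<le> (\<Sum>i\<in>I. L i) * norm (x - y)" for x y
  proof -
    have "norm ((\<Sum>i\<in>I. G i x) - (\<Sum>i\<in>I. G i y)) \<le> (\<Sum>i\<in>I. norm (G i x - G i y))"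
      by (simp flip: sum_subtractf add: norm_sum)
    also have "\<dots> \<le> (\<Sum>i\<in>I. L i * norm (x - y))"
      by (intro sum_mono lip)
    finally show ?thesis by (simp add: sum_distrib_right)
  qed
  ultimately show ?thesis
    unfolding L_smooth_def by (intro exI[of _ "\<lambda>x. \<Sum>i\<in>I. G i x"]) blast
qed

lemma descent_lemma:
  fixes g :: "'a::euclidean_space \<Rightarrow> real"
  assumes grad: "\<And>x. has_gradient g (G x) x"
    and lip: "\<And>x y. norm (G x - G y) \<le> L * norm (x - y)"
  shows "g y \<le> g x + G x \<bullet> (y - x) + L / 2 * (norm (y - x))\<^sup>2"
proof -
  define h where "h = y - x"
  define \<phi> where "\<phi> t = g (x + t *\<^sub>R h) - t * (G x \<bullet> h) - L / 2 * (norm h)\<^sup>2 * t\<^sup>2" for t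
  have "\<phi> 1 \<le> \<phi> 0"
  proof (rule DERIV_nonpos_imp_nonincreasing[of 0 1])
    fix t :: real
    assume t: "0 \<le> t" "t \<le> 1"
    have "((\<lambda>t. x + t *\<^sub>R h) has_derivative (\<lambda>s. s *\<^sub>R h)) (at t)"
      by (auto intro!: derivative_eq_intros)
    from has_derivative_compose[OF this grad[of "x + t *\<^sub>R h", unfolded has_gradient_def]]
    have "((\<lambda>t. g (x + t *\<^sub>R h)) has_real_derivative G (x + t *\<^sub>R h) \<bullet> h) (at t)"
      unfolding has_field_derivative_def
      by (rule has_derivative_eq_rhs) (simp add: o_def fun_eq_iff mult.commute)
    then have "(\<phi> has_real_derivative
        G (x + t *\<^sub>R h) \<bullet> h - G x \<bullet> h - L / 2 * (norm h)\<^sup>2 * (2 * t)) (at t)"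
      unfolding \<phi>_def by (auto intro!: derivative_eq_intros)
    moreover have "G (x + t *\<^sub>R h) \<bullet> h - G x \<bullet> h \<le> L / 2 * (norm h)\<^sup>2 * (2 * t)"
    proof -
      have "G (x + t *\<^sub>R h) \<bullet> h - G x \<bullet> h \<le> norm (G (x + t *\<^sub>R h) - G x) * norm h"
        by (metis inner_diff_left norm_cauchy_schwarz)
      also have "\<dots> \<le> L * norm (t *\<^sub>R h) * norm h"
        using lip[of "x + t *\<^sub>R h" x] by (simp add: mult_right_mono)
      also have "\<dots> = L / 2 * (norm h)\<^sup>2 * (2 * t)"
        using t by (simp add: power2_eq_square)
      finally show ?thesis .
    qed
    ultimately show "\<exists>d. (\<phi> has_real_derivative d) (at t) \<and> d \<le> 0"
      by (intro exI conjI) auto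
  qed simp
  then show ?thesis unfolding \<phi>_def h_def by simp
qed

theorem proposition4:
  fixes n :: nat and f :: "nat \<Rightarrow> 'a::euclidean_space \<Rightarrow> real"
    and L :: "nat \<Rightarrow> real" and xs :: "nat \<Rightarrow> 'a" and \<alpha> :: "nat \<Rightarrow> real"
    and ft :: "'a \<Rightarrow> real" and x\<alpha> :: 'a and L\<alpha> :: real
  assumes "n \<ge> 1"
    and smooth: "\<And>i. i \<in> {1..n} \<Longrightarrow> L_smooth (L i) (f i)"
    and minim: "\<And>i. i \<in> {1..n} \<Longrightarrow> is_minimizer (f i) (xs i)"
    and alpha: "\<And>i. i \<in> {1..n} \<Longrightarrow> 0 < \<alpha> i \<and> \<alpha> i < 1"
    and ft_def: "ft = (\<lambda>x. (1 / real n) * (\<Sum>i=1..n. f i (\<alpha> i *\<^sub>R x + (1 - \<alpha> i) *\<^sub>R xs i)))"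
    and xmin: "is_minimizer ft x\<alpha>"
    and L\<alpha>_def: "L\<alpha> = (1 / real n) * (\<Sum>i=1..n. (\<alpha> i)\<^sup>2 * L i)"
  shows "\<forall>x. (\<exists>G. has_gradient ft G x \<and> norm G \<le> L\<alpha> * norm (x - x\<alpha>))
             \<and> ft x - ft x\<alpha> \<le> L\<alpha> / 2 * (norm (x - x\<alpha>))\<^sup>2"
proof -
  have "L_smooth ((\<alpha> i)\<^sup>2 * L i) (\<lambda>x. f i (\<alpha> i *\<^sub>R x + (1 - \<alpha> i) *\<^sub>R xs i))"
    if "i \<in> {1..n}" for i
    using L_smooth_compose_affine[OF smooth[OF that]] .
  then have "L_smooth (\<Sum>i=1..n. (\<alpha> i)\<^sup>2 * L i)
      (\<lambda>x. \<Sum>i=1..n. f i (\<alpha> i *\<^sub>R x + (1 - \<alpha> i) *\<^sub>R xs i))"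
    by (intro L_smooth_sum) auto
  from L_smooth_scale[OF this, of "1 / real n"]
  have "L_smooth L\<alpha> ft"
    unfolding ft_def L\<alpha>_def by simp
  then obtain G where grad: "\<And>x. has_gradient ft (G x) x"
    and lip: "\<And>x y. norm (G x - G y) \<le> L\<alpha> * norm (x - y)"
    unfolding L_smooth_def by blast
  have "G x\<alpha> = 0"
    using has_gradient_zero_if_minimizer[OF grad xmin] .
  show ?thesis
  proof (intro allI conjI exI)
    fix x
    show "has_gradient ft (G x) x" by (rule grad)
    show "norm (G x) \<le> L\<alpha> * norm (x - x\<alpha>)"
      using lip[of x x\<alpha>] \<open>G x\<alpha> = 0\<close> by simp
    show "ft x - ft x\<alpha> \<le> L\<alpha> / 2 * (norm (x - x\<alpha>))\<^sup>2"
      using descent_lemma[OF grad lip, of x x\<alpha>] \<open>G x\<alpha> = 0\<close> by simp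
  qed
qed

end
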